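(* Let $a,b,g,h>0$ with $a+b=g+h$. Then the input crank of the Minkowskian planar 4R linkage with these link lengths is a crank.
   Context: Link lengths: $a$ input crank, $b$ output crank, $g$ ground (fixed link), $h$ coupler. Put $T_1=g+b-h-a$, $T_2=a-g+b-h$, $T_3=g-a-b-h$, $T_4=g-a+b+h$. The input crank is a crank if $T_1T_2\ge0$ and $T_3T_4\le0$, a rocker if $T_1T_2<0$ and $T_3T_4\le0$, and a superrocker if $T_1T_2<0$ and $T_3T_4>0$. *)

theory Defs
  imports Main "HOL.Real"
begin

text \<open>Grashof-type quantities for a planar 4R linkage with input crank a,
  output crank b, ground g, coupler h.\<close>

definition T1 :: "real \<Rightarrow> real \<Rightarrow> real \<Rightarrow> real \<Rightarrow> real" where
  "T1 a b g h = g + b - h - a"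
definition T2 :: "real \<Rightarrow> real \<Rightarrow> real \<Rightarrow> real \<Rightarrow> real" where
  "T2 a b g h = a - g + b - h"
definition T3 :: "real \<Rightarrow> real \<Rightarrow> real \<Rightarrow> real \<Rightarrow> real" where
  "T3 a b g h = g - a - b - h"
definition T4 :: "real \<Rightarrow> real \<Rightarrow> real \<Rightarrow> real \<Rightarrow> real" where
  "T4 a b g h = g - a + b + h"

definition input_is_crank :: "real \<Rightarrow> real \<Rightarrow> real \<Rightarrow> real \<Rightarrow> bool" where
  "input_is_crank a b g h \<longleftrightarrow>
     T1 a b g h * T2 a b g h \<ge> 0 \<and> T3 a b g h * T4 a b g h \<le> 0"

definition input_is_rocker :: "real \<Rightarrow> real \<Rightarrow> real \<Rightarrow> real \<Rightarrow> bool" where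
  "input_is_rocker a b g h \<longleftrightarrow>
     T1 a b g h * T2 a b g h < 0 \<and> T3 a b g h * T4 a b g h \<le> 0"

definition input_is_superrocker :: "real \<Rightarrow> real \<Rightarrow> real \<Rightarrow> real \<Rightarrow> bool" where
  "input_is_superrocker a b g h \<longleftrightarrow>
     T1 a b g h * T2 a b g h < 0 \<and> T3 a b g h * T4 a b g h > 0"

end

theory Submission
  imports Defs
begin

text \<open>When \<open>a + b = g + h\<close> the factor \<open>T\<^sub>2\<close> vanishes, so \<open>T\<^sub>1 T\<^sub>2 = 0\<close>, while
  \<open>T\<^sub>3 = -2h\<close> and \<open>T\<^sub>4 = 2b\<close> have opposite signs.\<close>

lemma T2_eq_zero_if_balanced:
  assumes "a + b = g + h"
  shows "T2 a b g h = 0"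
  using assms by (simp add: T2_def)

lemma T3_T4_if_balanced:
  assumes "a + b = g + h"
  shows "T3 a b g h * T4 a b g h = - 4 * b * h"
proof -
  have "T3 a b g h = - 2 * h" and "T4 a b g h = 2 * b"
    using assms by (simp_all add: T3_def T4_def)
  then show ?thesis by simp
qed

lemma input_is_crank_if_balanced:
  assumes "a + b = g + h" and "b * h \<ge> 0"
  shows "input_is_crank a b g h"
  using assms
  by (simp add: input_is_crank_def T2_eq_zero_if_balanced T3_T4_if_balanced mult.assoc)

theorem mainTheorem18:
  fixes a b g h :: real
  assumes "a > 0" and "b > 0" and "g > 0" and "h > 0"
    and "a + b = g + h"
  shows "input_is_crank a b g h"
  using assms by (intro input_is_crank_if_balanced) simp_all

end
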